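(* Assume the standing setup below. Then for all $r>0$ and all $t\ge2$, $$\log g(r^t)\ge t\log g(r).$$
   Context: Standing setup: $(\delta_n)_{n\in\mathbb N}$ is a sequence with $0<\delta_n<1/2$; $(a_n)_{n\in\mathbb N}$ is a positive strictly increasing sequence; $p_n=\lfloor a_n^{\delta_n/4}/4\rfloor$; and for all $n\in\mathbb N$: (C1) $a_1^{\delta_1/4}\ge4$, $a_{n+1}>a_n^2$, and $a_{n+1}^{\delta_{n+1}/2}>16a_n^{\delta_n}$; (C2) $a_{n+1}^{\delta_{n+1}/16}>a_n^{\delta_n}\log a_{n+1}$. The function $g:[0,\infty)\to[0,\infty)$ is defined by $g(r)=r^3$ for $0\le r<a_1$ and $g(r)=r^3\prod_{n:\,a_n\le r}(1+r/a_n)^{2p_n}$ for $r\ge a_1$. *)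

theory Defs
  imports "HOL-Analysis.Analysis"
begin

text \<open>Sequences are indexed by nat starting at 0, so a 0 plays the role of a_1.\<close>

definition pn :: "(nat \<Rightarrow> real) \<Rightarrow> (nat \<Rightarrow> real) \<Rightarrow> nat \<Rightarrow> nat" where
  "pn a \<delta> n = nat \<lfloor>a n powr (\<delta> n / 4) / 4\<rfloor>"

definition gfun :: "(nat \<Rightarrow> real) \<Rightarrow> (nat \<Rightarrow> real) \<Rightarrow> real \<Rightarrow> real" where
  "gfun a \<delta> r = (if r < a 0 then r ^ 3
     else r ^ 3 * (\<Prod>n\<in>{n. a n \<le> r}. (1 + r / a n) ^ (2 * pn a \<delta> n)))"

end

theory Submission
  imports Defs
begin

(* Write g(r) = r^3 * G(r) where
     G(s) = prod over {n. a n <= s} of (1 + s / a n)^(2 p_n),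
   which is valid for every r because the index set is empty below a_1.
   Since ln is monotone it suffices to show g(r)^t <= g(r^t), i.e.
   G(r)^t <= G(r^t).  Each factor satisfies (1 + r/A)^t <= 1 + r^t/A
   whenever 4 <= A <= r and t >= 2 (the elementary inequality
   one_plus_div_powr_le), and the index set only grows from r to r^t,
   while the additional factors are >= 1.  Of the standing hypotheses only
   a_1 >= 4 (from C1 and delta_1 < 1/2), monotonicity of (a_n) and the
   growth a_(n+1) > a_n^2 (which makes all index sets finite) are needed. *)

lemma one_plus_div_powr_le:
  fixes x A t :: real
  assumes A4: "4 \<le> A" and xA: "A \<le> x" and t2: "2 \<le> t"
  shows "(1 + x / A) powr t \<le> 1 + x powr t / A"
proof -
  have A_pos: "0 < A" using A4 by simp
  have two_pow_le: "2 powr t \<le> A powr t / A"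
  proof -
    have "2 powr t \<le> 2 powr (2 * (t - 1))"
      using t2 by (intro powr_mono) auto
    also have "\<dots> = (2 powr 2) powr (t - 1)"
      by (simp only: powr_powr)
    also have "\<dots> = 4 powr (t - 1)"
      by simp
    also have "\<dots> \<le> A powr (t - 1)"
      using t2 A4 by (intro powr_mono2) auto
    also have "\<dots> = A powr t / A"
      using A_pos by (simp add: powr_diff)
    finally show ?thesis .
  qed
  have "(1 + x / A) powr t \<le> (2 * x / A) powr t"
    using xA A_pos t2 by (intro powr_mono2) (auto simp: field_simps)
  also have "\<dots> = 2 powr t * x powr t / A powr t"
    by (simp add: powr_mult powr_divide)
  also have "\<dots> \<le> (A powr t / A) * x powr t / A powr t"
    using two_pow_le by (intro divide_right_mono mult_right_mono) auto
  also have "\<dots> = x powr t / A"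
    using A_pos by simp
  finally show ?thesis by simp
qed

lemma power_powr_commute:
  fixes x t :: real
  assumes "0 < x"
  shows "(x ^ k) powr t = (x powr t) ^ k"
  using assms by (simp add: powr_realpow[symmetric] powr_powr powr_power mult.commute)

definition node_prod :: "(nat \<Rightarrow> real) \<Rightarrow> (nat \<Rightarrow> nat) \<Rightarrow> real \<Rightarrow> real" where
  "node_prod w k s = (\<Prod>n\<in>{n. w n \<le> s}. (1 + s / w n) ^ k n)"

lemma node_prod_ge_1:
  assumes "\<And>n. 0 < w n" and "0 \<le> s"
  shows "1 \<le> node_prod w k s"
  unfolding node_prod_def using assms
  by (intro prod_ge_1) (auto intro!: one_le_power simp: less_imp_le)

lemma node_prod_powr_le:
  assumes w4: "\<And>n. 4 \<le> w n" and fin: "\<And>s. finite {n. w n \<le> s}"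
    and s_pos: "0 < s" and t2: "2 \<le> t"
  shows "node_prod w k s powr t \<le> node_prod w k (s powr t)"
proof -
  have w_pos: "0 < w n" for n using w4[of n] by simp
  have nodes_grow: "{n. w n \<le> s} \<subseteq> {n. w n \<le> s powr t}"
  proof
    fix n assume "n \<in> {n. w n \<le> s}"
    hence "w n \<le> s" by simp
    moreover have "s powr 1 \<le> s powr t"
      using \<open>w n \<le> s\<close> w4[of n] t2 by (intro powr_mono) auto
    ultimately show "n \<in> {n. w n \<le> s powr t}" using s_pos by simp
  qed
  have "node_prod w k s powr t = (\<Prod>n\<in>{n. w n \<le> s}. ((1 + s / w n) powr t) ^ k n)"
    unfolding node_prod_def prod_powr_distrib
    using s_pos w_pos by (intro prod.cong refl power_powr_commute) (simp add: add_pos_pos)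
  also have "\<dots> \<le> (\<Prod>n\<in>{n. w n \<le> s}. (1 + s powr t / w n) ^ k n)"
    using w4 t2 by (intro prod_mono conjI power_mono one_plus_div_powr_le) auto
  also have "\<dots> \<le> node_prod w k (s powr t)"
    unfolding node_prod_def
    using fin nodes_grow w_pos
    by (intro prod_mono2) (auto intro!: one_le_power simp: less_imp_le)
  finally show ?thesis .
qed

lemma finite_sublevel_if_geometric:
  fixes w :: "nat \<Rightarrow> real"
  assumes c1: "1 < c" and geom: "\<And>n. c ^ n \<le> w n"
  shows "finite {n. w n \<le> s}"
proof -
  obtain N where N: "s < c ^ N"
    using real_arch_pow[OF c1] by blast
  have "{n. w n \<le> s} \<subseteq> {..<N}"
  proof
    fix n assume "n \<in> {n. w n \<le> s}"
    hence "c ^ n < c ^ N"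
      using geom[of n] N by simp
    thus "n \<in> {..<N}"
      using c1 by simp
  qed
  thus ?thesis by (rule finite_subset) simp
qed

lemma geometric_lower_bound:
  fixes a :: "nat \<Rightarrow> real"
  assumes a0: "1 < a 0" and sq: "\<And>n. (a n)\<^sup>2 < a (Suc n)"
  shows "a 0 ^ Suc n \<le> a n"
proof (induction n)
  case 0
  show ?case by simp
next
  case (Suc n)
  have "a 0 = a 0 ^ 1" by simp
  also have "\<dots> \<le> a 0 ^ Suc n"
    using a0 by (intro power_increasing) auto
  also have "\<dots> \<le> a n" by (rule Suc)
  finally have "a 0 \<le> a n" .
  hence "a 0 ^ Suc (Suc n) \<le> a n * a n"
    using Suc a0 by (simp add: mult_mono')
  also have "\<dots> < a (Suc n)"
    using sq[of n] by (simp add: power2_eq_square)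
  finally show ?case by simp
qed

lemma lower_bound_from_powr:
  fixes x e c :: real
  assumes "0 < x" "0 < e" "e \<le> 1" "1 \<le> c" "c \<le> x powr e"
  shows "c \<le> x"
proof -
  have "1 \<le> x"
  proof (rule ccontr)
    assume "\<not> 1 \<le> x"
    hence "x powr e < 1 powr e"
      using assms by (intro powr_less_mono2) auto
    thus False using assms by simp
  qed
  hence "x powr e \<le> x powr 1"
    using assms by (intro powr_mono) auto
  thus ?thesis using assms by simp
qed

lemma gfun_eq_node_prod:
  assumes "mono a"
  shows "gfun a \<delta> r = r ^ 3 * node_prod a (\<lambda>n. 2 * pn a \<delta> n) r"
proof (cases "r < a 0")
  case True
  have "r < a n" for n
    using True monoD[OF assms, of 0 n] by simp
  hence "{n. a n \<le> r} = {}"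
    by (auto simp: not_le[symmetric])
  thus ?thesis using True by (simp add: gfun_def node_prod_def)
qed (simp add: gfun_def node_prod_def)

theorem lemma3p5:
  fixes a \<delta> :: "nat \<Rightarrow> real"
  assumes delta_pos: "\<And>n. 0 < \<delta> n" and delta_lt: "\<And>n. \<delta> n < 1/2"
    and a_pos: "\<And>n. 0 < a n" and a_mono: "strict_mono a"
    and C1a: "a 0 powr (\<delta> 0 / 4) \<ge> 4"
    and C1b: "\<And>n. a (Suc n) > (a n)\<^sup>2"
    and C1c: "\<And>n. a (Suc n) powr (\<delta> (Suc n) / 2) > 16 * a n powr \<delta> n"
    and C2: "\<And>n. a (Suc n) powr (\<delta> (Suc n) / 16) > a n powr \<delta> n * ln (a (Suc n))"
    and r_pos: "0 < r" and t_ge: "2 \<le> t"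
  shows "ln (gfun a \<delta> (r powr t)) \<ge> t * ln (gfun a \<delta> r)"
proof -
  define k where "k n = 2 * pn a \<delta> n" for n
  have mono_a: "mono a" using a_mono by (rule strict_mono_mono)
  have a0_ge_4: "4 \<le> a 0"
    using a_pos[of 0] delta_pos[of 0] delta_lt[of 0] C1a
    by (intro lower_bound_from_powr[of "a 0" "\<delta> 0 / 4"]) simp_all
  have a_ge_4: "4 \<le> a n" for n
    using a0_ge_4 monoD[OF mono_a, of 0 n] by simp
  have geom: "a 0 ^ n \<le> a n" for n
  proof -
    have "a 0 ^ n \<le> a 0 ^ Suc n"
      using a0_ge_4 by (intro power_increasing) auto
    also have "\<dots> \<le> a n"
      using a0_ge_4 C1b by (intro geometric_lower_bound) auto
    finally show ?thesis .
  qed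
  have fin: "finite {n. a n \<le> s}" for s
    using a0_ge_4 geom by (intro finite_sublevel_if_geometric[of "a 0"]) auto
  have g_eq: "gfun a \<delta> s = s ^ 3 * node_prod a k s" for s
    unfolding k_def by (rule gfun_eq_node_prod[OF mono_a])
  have g_pos: "0 < gfun a \<delta> s" if "0 < s" for s
    using that node_prod_ge_1[of a s k] a_pos unfolding g_eq by simp
  have "gfun a \<delta> r powr t = (r powr t) ^ 3 * node_prod a k r powr t"
    using r_pos unfolding g_eq by (simp add: powr_mult power_powr_commute)
  also have "\<dots> \<le> (r powr t) ^ 3 * node_prod a k (r powr t)"
    using a_ge_4 fin r_pos t_ge by (intro mult_left_mono node_prod_powr_le) auto
  also have "\<dots> = gfun a \<delta> (r powr t)"
    unfolding g_eq ..
  finally have "gfun a \<delta> r powr t \<le> gfun a \<delta> (r powr t)" .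
  thus ?thesis
    using g_pos[OF r_pos] g_pos[of "r powr t"] r_pos by (simp flip: ln_powr)
qed

end
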